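(* Let $n,k\in\mathbb{N}$. If a finite set $X\subseteq\mathbb{N}$ is $\omega^{n+6k}$-large and exp-sparse, then $X$ admits an $(\omega^n,\omega^k)$-grouping, i.e. for every colouring $P:[X]^2\to 2$ there exists an $(\omega^n,\omega^k)$-grouping for $P$.
   Context: Ordinals below $\omega^\omega$ are in Cantor normal form; $\omega^j\cdot m$ = sum of $m$ copies of $\omega^j$. For $m\in\mathbb{N}$: $0[m]=0$, $(\beta+1)[m]=\beta$, $(\beta+\omega^{n})[m]=\beta+\omega^{n-1}\cdot m$ for $n\ge1$. A finite $X=\{x_0<\dots<x_{\ell-1}\}\subseteq\mathbb{N}$ is $\alpha$-large if $\alpha[x_0]\cdots[x_{\ell-1}]=0$. A set $X$ with $\min X\ge3$ is exp-sparse if $x<y$ in $X$ implies $4^x<y$. For $\alpha,\beta<\omega^\omega$, $X\subseteq\mathbb{N}$ and $P:[X]^2\to2$, a finite sequence $\langle F_i\subseteq X:i<\ell\rangle$ of finite sets is an $(\alpha,\beta)$-grouping for $P$ if: (1) $\max F_i<\min F_j$ for all $i<j<\ell$; (2) each $F_i$ is $\alpha$-large; (3) $\{\max F_i:i<\ell\}$ is $\beta$-large; (4) for all $i<j<\ell$, all $x,x'\in F_i$ and $y,y'\in F_j$, $P(x,y)=P(x',y')$. *)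

theory Defs
  imports Main
begin

text \<open>Ordinals below omega^omega in Cantor normal form
  omega^e_1 + ... + omega^e_k with e_1 >= ... >= e_k are represented by the list
  of exponents in REVERSED order [e_k, ..., e_1] (smallest exponent first, i.e.
  the head is the exponent of the last CNF term).\<close>

type_synonym ord_cnf = "nat list"

definition ord_wf :: "ord_cnf \<Rightarrow> bool" where
  "ord_wf a \<longleftrightarrow> sorted a"

definition omega_pow :: "nat \<Rightarrow> ord_cnf" where
  "omega_pow n = [n]"

text \<open>Fundamental sequence: 0[m] = 0, (b+1)[m] = b,
  (b + omega^(n+1))[m] = b + omega^n * m.\<close>
fun fund :: "ord_cnf \<Rightarrow> nat \<Rightarrow> ord_cnf" where
  "fund [] m = []"
| "fund (0 # r) m = r"
| "fund (Suc n # r) m = replicate m n @ r"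

definition large :: "ord_cnf \<Rightarrow> nat set \<Rightarrow> bool" where
  "large \<alpha> X \<longleftrightarrow> finite X \<and> foldl fund \<alpha> (sorted_list_of_set X) = []"

definition exp_sparse :: "nat set \<Rightarrow> bool" where
  "exp_sparse X \<longleftrightarrow> (\<forall>x\<in>X. 3 \<le> x) \<and> (\<forall>x\<in>X. \<forall>y\<in>X. x < y \<longrightarrow> 4 ^ x < y)"

text \<open>A colouring P of [X]^2 is given as P x y for x < y in X.
  A finite sequence of sets is given by its length l and F :: nat => nat set.\<close>
definition grouping ::
  "ord_cnf \<Rightarrow> ord_cnf \<Rightarrow> nat set \<Rightarrow> (nat \<Rightarrow> nat \<Rightarrow> bool) \<Rightarrow> nat \<Rightarrow> (nat \<Rightarrow> nat set) \<Rightarrow> bool" where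
  "grouping \<alpha> \<beta> X P l F \<longleftrightarrow>
     (\<forall>i<l. finite (F i) \<and> F i \<subseteq> X) \<and>
     (\<forall>i j. i < j \<and> j < l \<longrightarrow> Max (F i) < Min (F j)) \<and>
     (\<forall>i<l. large \<alpha> (F i)) \<and>
     large \<beta> ((\<lambda>i. Max (F i)) ` {..<l}) \<and>
     (\<forall>i j. i < j \<and> j < l \<longrightarrow>
        (\<forall>x\<in>F i. \<forall>x'\<in>F i. \<forall>y\<in>F j. \<forall>y'\<in>F j. P x y = P x' y'))"

end

theory Submission
  imports Defs "HOL-Library.FuncSet"
begin

(* An omega^(e+1)-large set T contains, above its minimum t, t consecutive omega^e-large
   blocks; conversely t such blocks above t form, together with t, an omega^(e+1)-large set.
   On exp-sparse sets this yields a pigeonhole principle: if T is omega^(a+1)-large and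
   coloured with at most min T colours, then some colour class is omega^a-large.

   Four rounds of this principle turn an omega^(n+6)-large set into an (omega^n, omega)-grouping:
   two blocks A < B are thinned to F0 < R with P constant on F0 x R; then max F0 blocks of R
   are thinned so that P x y depends only on x and on the block of y, and finally only on the
   blocks of x and y.  For k + 1 we group every one of these omega^(n+6k)-large groups by
   induction; the maxima of all inner groups form an omega^(k+1)-large set, because the
   maximum of the first outer group bounds the number of the remaining ones. *)

lemma foldl_fund_Nil [simp]: "foldl fund [] xs = []"
  by (induction xs) auto

lemma fund_append: "a \<noteq> [] \<Longrightarrow> fund (a @ d) m = fund a m @ d"
  by (cases "(a, m)" rule: fund.cases) auto

inductive fund_desc :: "nat \<Rightarrow> ord_cnf \<Rightarrow> ord_cnf \<Rightarrow> bool" for y where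
  refl: "fund_desc y a a"
| step: "fund_desc y a b \<Longrightarrow> z \<le> y \<Longrightarrow> fund_desc y (fund a z) b"

lemma fund_desc_trans: "fund_desc y a b \<Longrightarrow> fund_desc y b c \<Longrightarrow> fund_desc y a c"
  by (induction a b rule: fund_desc.induct) (auto intro: fund_desc.step)

lemma fund_desc_Nil: "fund_desc y a [] \<Longrightarrow> a = []"
  by (induction a "[] :: ord_cnf" rule: fund_desc.induct) auto

lemma fund_desc_drop: "fund_desc y (drop i a) a"
proof (induction i)
  case 0
  show ?case by (simp add: fund_desc.refl)
next
  case (Suc i)
  have "fund_desc y (fund (drop i a) 0) a"
    using fund_desc.step[OF Suc] by simp
  moreover have "fund (drop i a) 0 = drop (Suc i) a"
    by (cases "(drop i a, 0::nat)" rule: fund.cases) (auto simp: drop_Suc drop_tl)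
  ultimately show ?case by simp
qed

lemma fund_desc_fund_fund:
  assumes "z \<le> x"
  shows "fund_desc x (fund (fund a z) x) (fund a x)"
proof (cases "(a, x)" rule: fund.cases)
  case (1 m)
  then show ?thesis by (simp add: fund_desc.refl)
next
  case (2 r m)
  have "fund_desc x (fund r x) r" by (rule fund_desc.step[OF fund_desc.refl]) simp
  then show ?thesis using 2 by simp
next
  case (3 e r m)
  have "fund_desc x (replicate z e @ r) (replicate x e @ r)"
    using fund_desc_drop[of x "x - z" "replicate x e @ r"] assms by simp
  then show ?thesis using 3 fund_desc.step[of x _ _ x] by simp
qed

(* The Bachmann property, on which all monotonicity properties of largeness rest. *)
lemma fund_desc_fund: "fund_desc y a b \<Longrightarrow> y \<le> x \<Longrightarrow> fund_desc x (fund a x) (fund b x)"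
proof (induction a b rule: fund_desc.induct)
  case (refl a)
  show ?case by (rule fund_desc.refl)
next
  case (step a b z)
  then show ?case using fund_desc_fund_fund[of z x a] fund_desc_trans by simp
qed

lemma foldl_fund_desc:
  assumes "foldl fund b xs = []" "fund_desc y a b" "sorted xs" "\<forall>x\<in>set xs. y \<le> x"
  shows "foldl fund a xs = []"
  using assms
proof (induction xs arbitrary: a b y)
  case Nil
  then show ?case using fund_desc_Nil by simp
next
  case (Cons x xs)
  then show ?case using fund_desc_fund[OF Cons.prems(2), of x] by simp
qed

lemma foldl_fund_Cons:
  assumes "foldl fund a zs = []" "sorted (x # zs)"
  shows "foldl fund a (x # zs) = []"
proof -
  have "fund_desc x (fund a x) a" by (rule fund_desc.step[OF fund_desc.refl]) simp
  then show ?thesis using foldl_fund_desc[OF assms(1)] assms(2) by simp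
qed

lemma foldl_fund_prepend:
  "foldl fund a zs = [] \<Longrightarrow> sorted (ws @ zs) \<Longrightarrow> foldl fund a (ws @ zs) = []"
proof (induction ws)
  case (Cons w ws)
  then show ?case using foldl_fund_Cons[of a "ws @ zs" w] by simp
qed simp

(* Exponent lists are reversed Cantor normal forms, so a @ d is the ordinal d + a:
   its descent first exhausts a and then continues from d. *)
lemma foldl_fund_append_cases:
  "foldl fund a xs \<noteq> [] \<and> foldl fund (a @ d) xs = foldl fund a xs @ d \<or>
   (\<exists>ys zs. xs = ys @ zs \<and> foldl fund a ys = [] \<and> foldl fund (a @ d) ys = d)"
proof (induction xs arbitrary: a)
  case Nil
  show ?case by (cases "a = []") (auto intro!: exI[of _ "[]"])
next
  case (Cons x xs)
  show ?case
  proof (cases "a = []")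
    case True
    then show ?thesis by (intro disjI2) (rule exI[of _ "[]"], simp)
  next
    case False
    from Cons.IH[of "fund a x"] show ?thesis
    proof
      assume "\<exists>ys zs. xs = ys @ zs \<and> foldl fund (fund a x) ys = [] \<and> foldl fund (fund a x @ d) ys = d"
      then obtain ys zs where "xs = ys @ zs" "foldl fund (fund a x) ys = []" "foldl fund (fund a x @ d) ys = d"
        by blast
      then show ?thesis using False by (intro disjI2 exI[of _ "x # ys"] exI[of _ zs]) (simp add: fund_append)
    qed (use False in \<open>simp add: fund_append\<close>)
  qed
qed

lemma foldl_fund_append_split:
  assumes "foldl fund (a @ d) xs = []"
  obtains ys zs where "xs = ys @ zs" "foldl fund a ys = []" "foldl fund d zs = []"
  using foldl_fund_append_cases[of a xs d] assms by auto

lemma foldl_fund_append_join: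
  assumes "foldl fund a ys = []" "foldl fund d zs = []" "sorted (ys @ zs)"
  shows "foldl fund (a @ d) (ys @ zs) = []"
proof -
  obtain ys1 ys2 where ys: "ys = ys1 @ ys2" "foldl fund (a @ d) ys1 = d"
    using foldl_fund_append_cases[of a ys d] assms(1) by auto
  have "foldl fund d (ys2 @ zs) = []"
    using foldl_fund_prepend[OF assms(2)] assms(3) ys(1) by (simp add: sorted_append)
  then show ?thesis using ys by simp
qed

lemma foldl_fund_replicate_0: "foldl fund (replicate m 0) ys = replicate (m - length ys) 0"
proof (induction ys arbitrary: m)
  case (Cons y ys)
  then show ?case by (cases m) auto
qed simp

lemma fund_desc_exp_le: "b \<le> c \<Longrightarrow> fund_desc 1 [b] [c]"
proof (induction "c - b" arbitrary: b)
  case 0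
  then show ?case by (simp add: fund_desc.refl)
next
  case (Suc d)
  then have "fund_desc 1 [Suc b] [c]" by simp
  then show ?case using fund_desc.step[of 1 "[Suc b]" "[c]" 1] by simp
qed

definition set_less :: "'a::order set \<Rightarrow> 'a set \<Rightarrow> bool" where
  "set_less A B \<longleftrightarrow> (\<forall>a\<in>A. \<forall>b\<in>B. a < b)"

lemma set_less_subset: "set_less A B \<Longrightarrow> A' \<subseteq> A \<Longrightarrow> B' \<subseteq> B \<Longrightarrow> set_less A' B'"
  unfolding set_less_def by blast

lemma large_finite: "large a X \<Longrightarrow> finite X"
  unfolding large_def by simp

lemma large_Nil_iff: "large [] X \<longleftrightarrow> finite X"
  unfolding large_def by simp

lemma large_nonempty: "large a X \<Longrightarrow> a \<noteq> [] \<Longrightarrow> X \<noteq> {}"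
  unfolding large_def by auto

lemma large_set_iff: "sorted_wrt (<) xs \<Longrightarrow> large a (set xs) \<longleftrightarrow> foldl fund a xs = []"
  unfolding large_def by (simp add: sorted_list_of_set.idem_if_sorted_distinct strict_sorted_iff)

lemma large_Min:
  "finite X \<Longrightarrow> X \<noteq> {} \<Longrightarrow> large a X \<longleftrightarrow> large (fund a (Min X)) (X - {Min X})"
  unfolding large_def by (simp add: sorted_list_of_set_nonempty)

lemma large_insert:
  assumes "large a S"
  shows "large a (insert z S)"
proof (cases "z \<in> S")
  case True
  then show ?thesis using assms by (simp add: insert_absorb)
next
  case False
  define xs where "xs = sorted_list_of_set S"
  have xs: "sorted_wrt (<) xs" "set xs = S"
    using large_finite[OF assms] by (simp_all add: xs_def)
  define as where "as = filter (\<lambda>x. x < z) xs"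
  define bs where "bs = filter (\<lambda>x. z < x) xs"
  have sorted_bs: "sorted_wrt (<) (z # bs)"
    using xs(1) by (auto simp: bs_def intro: sorted_wrt_filter)
  have sorted_split: "sorted_wrt (<) (as @ z # bs)" "sorted_wrt (<) (as @ bs)"
    using xs(1) sorted_bs by (auto simp: as_def sorted_wrt_append intro: sorted_wrt_filter)
  have sets: "set (as @ bs) = S" "set (as @ z # bs) = insert z S"
    using xs(2) False by (auto simp: as_def bs_def) (metis linorder_neqE_nat)
  have "foldl fund (foldl fund a as) bs = []"
    using assms large_set_iff[OF sorted_split(2)] sets(1) by simp
  then have "foldl fund (foldl fund a as) (z # bs) = []"
    using sorted_bs by (intro foldl_fund_Cons) (auto simp: strict_sorted_iff)
  then show ?thesis
    using large_set_iff[OF sorted_split(1)] sets(2) by simp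
qed

lemma large_mono:
  assumes "large a X" "X \<subseteq> Y" "finite Y"
  shows "large a Y"
proof -
  have "large a (X \<union> D)" if "finite D" for D
    using that by (induction D rule: finite_induct) (simp_all add: assms(1) large_insert)
  from this[of "Y - X"] show ?thesis
    using assms(2,3) by (simp add: Un_absorb1)
qed

lemma large_exp_le:
  assumes "large [c] X" "b \<le> c"
  shows "large [b] X"
proof (cases "0 \<in> X")
  case True
  then have "Min X = 0" using large_finite[OF assms(1)] by (simp add: Min_eqI)
  moreover have "fund [b] 0 = []" by (cases b) auto
  ultimately show ?thesis
    using large_Min[of X "[b]"] True large_finite[OF assms(1)] by (auto simp: large_Nil_iff)
next
  case False
  then have "\<forall>x\<in>set (sorted_list_of_set X). 1 \<le> x"
    using large_finite[OF assms(1)] by (auto simp: Suc_le_eq intro: gr0I)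
  then show ?thesis
    using assms foldl_fund_desc[OF _ fund_desc_exp_le[OF assms(2)]] unfolding large_def by simp
qed

lemma large_omega_iff:
  assumes "finite X" "X \<noteq> {}"
  shows "large [1] X \<longleftrightarrow> Min X + 1 \<le> card X"
proof -
  have "large [1] X \<longleftrightarrow> large (replicate (Min X) 0) (X - {Min X})"
    using large_Min[OF assms, of "[1]"] by simp
  also have "\<dots> \<longleftrightarrow> Min X \<le> card (X - {Min X})"
    using assms(1) by (simp add: large_def foldl_fund_replicate_0)
  also have "\<dots> \<longleftrightarrow> Min X + 1 \<le> card X"
    using assms card_gt_0_iff[of X] by (simp add: Min_in) linarith
  finally show ?thesis .
qed

lemma large_exp_zeroI: "finite S \<Longrightarrow> S \<noteq> {} \<Longrightarrow> large [0] S"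
  using large_Min[of S "[0]"] by (simp add: large_Nil_iff)

lemma large_Un:
  assumes "large a Y" "large d Z" "set_less Y Z"
  shows "large (a @ d) (Y \<union> Z)"
proof -
  define ys zs where "ys = sorted_list_of_set Y" and "zs = sorted_list_of_set Z"
  have fin: "finite Y" "finite Z" using assms large_finite by auto
  have sorted: "sorted_wrt (<) (ys @ zs)"
    using assms(3) fin by (simp add: ys_def zs_def sorted_wrt_append set_less_def)
  have "foldl fund (a @ d) (ys @ zs) = []"
    using assms(1,2) sorted by (intro foldl_fund_append_join)
      (auto simp: ys_def zs_def large_def strict_sorted_iff)
  then show ?thesis
    using large_set_iff[OF sorted] fin by (simp add: ys_def zs_def)
qed

lemma large_append_split:
  assumes "large (a @ d) X"
  obtains Y Z where "Y \<subseteq> X" "Z \<subseteq> X" "set_less Y Z" "large a Y" "large d Z"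
proof -
  define xs where "xs = sorted_list_of_set X"
  have xs: "sorted_wrt (<) xs" "set xs = X"
    using large_finite[OF assms] by (simp_all add: xs_def)
  obtain ys zs where split: "xs = ys @ zs" "foldl fund a ys = []" "foldl fund d zs = []"
    using assms foldl_fund_append_split unfolding large_def xs_def by blast
  have "sorted_wrt (<) ys" "sorted_wrt (<) zs" "set_less (set ys) (set zs)"
    using xs(1) split(1) by (simp_all add: sorted_wrt_append set_less_def)
  then show ?thesis
    using split xs(2) by (intro that[of "set ys" "set zs"]) (auto simp: large_set_iff)
qed

lemma large_replicate_blocks:
  assumes "large (replicate j e) Y"
  obtains Ks where "length Ks = j" "sorted_wrt set_less Ks" "\<forall>K\<in>set Ks. K \<subseteq> Y \<and> large [e] K"
  using assms
proof (induction j arbitrary: Y thesis)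
  case 0
  then show ?case using 0(1)[of "[]"] by simp
next
  case (Suc j)
  obtain K Z where KZ: "K \<subseteq> Y" "Z \<subseteq> Y" "set_less K Z" "large [e] K" "large (replicate j e) Z"
    using large_append_split[of "[e]" "replicate j e" Y] Suc.prems(2) by auto
  obtain Ks where Ks: "length Ks = j" "sorted_wrt set_less Ks" "\<forall>K\<in>set Ks. K \<subseteq> Z \<and> large [e] K"
    using Suc.IH[OF _ KZ(5)] by blast
  have "\<forall>K'\<in>set Ks. set_less K K'"
    using KZ(3) Ks(3) set_less_subset by blast
  moreover have "\<forall>K'\<in>set Ks. K' \<subseteq> Y"
    using Ks(3) KZ(2) by blast
  ultimately show ?case
    using KZ Ks by (intro Suc.prems(1)[of "K # Ks"]) simp_all
qed

lemma large_replicate_UnionI: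
  assumes "sorted_wrt set_less Ks" "\<forall>K\<in>set Ks. large [e] K" "j \<le> length Ks"
  shows "large (replicate j e) (\<Union>(set Ks))"
  using assms
proof (induction Ks arbitrary: j)
  case Nil
  then show ?case by (simp add: large_Nil_iff)
next
  case (Cons K Ks)
  show ?case
  proof (cases j)
    case 0
    then show ?thesis using Cons.prems(2) large_finite by (auto simp: large_Nil_iff)
  next
    case (Suc i)
    have "set_less K (\<Union>(set Ks))"
      using Cons.prems(1) by (auto simp: set_less_def)
    then have "large ([e] @ replicate i e) (K \<union> \<Union>(set Ks))"
      using Cons Suc by (intro large_Un) auto
    then show ?thesis using Suc by simp
  qed
qed

lemma large_Suc_blocks:
  assumes "large [Suc e] T"
  obtains Ks where "length Ks = Min T" "sorted_wrt set_less Ks"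
    "\<forall>K\<in>set Ks. K \<subseteq> T - {Min T} \<and> large [e] K"
proof -
  have "large (replicate (Min T) e) (T - {Min T})"
    using large_Min[of T "[Suc e]"] assms large_finite large_nonempty by fastforce
  then show ?thesis using that large_replicate_blocks by blast
qed

lemma large_Suc_insertI:
  assumes "sorted_wrt set_less Ks" "\<forall>K\<in>set Ks. large [e] K \<and> (\<forall>x\<in>K. w < x)" "w \<le> length Ks"
  shows "large [Suc e] (insert w (\<Union>(set Ks)))"
proof -
  let ?S = "insert w (\<Union>(set Ks))"
  have "\<forall>K\<in>set Ks. finite K" using assms(2) large_finite by blast
  then have fin: "finite ?S" by simp
  have "Min ?S = w" using assms(2) fin by (intro Min_eqI) (auto intro: less_imp_le)
  moreover have "?S - {w} = \<Union>(set Ks)" using assms(2) by auto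
  moreover have "large (replicate w e) (\<Union>(set Ks))"
    using assms by (intro large_replicate_UnionI) auto
  ultimately show ?thesis using large_Min[OF fin, of "[Suc e]"] by simp
qed

lemma exp_sparse_subset: "exp_sparse X \<Longrightarrow> Y \<subseteq> X \<Longrightarrow> exp_sparse Y"
  unfolding exp_sparse_def by blast

lemma exp_sparse_less: "exp_sparse X \<Longrightarrow> x \<in> X \<Longrightarrow> y \<in> X \<Longrightarrow> x < y \<Longrightarrow> 4 ^ x < y"
  unfolding exp_sparse_def by blast

lemma exp_sparse_ge_3: "exp_sparse X \<Longrightarrow> x \<in> X \<Longrightarrow> 3 \<le> x"
  unfolding exp_sparse_def by blast

lemma exp_sparse_large_Suc_blocks:
  assumes "exp_sparse T" "large [Suc e] T"
  obtains Ks where "length Ks = Min T" "sorted_wrt set_less Ks"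
    "\<forall>K\<in>set Ks. K \<subseteq> T - {Min T} \<and> large [e] K \<and> (\<forall>x\<in>K. 4 ^ Min T < x)"
proof -
  obtain Ks where Ks: "length Ks = Min T" "sorted_wrt set_less Ks"
    "\<forall>K\<in>set Ks. K \<subseteq> T - {Min T} \<and> large [e] K"
    using large_Suc_blocks[OF assms(2)] by blast
  have T: "finite T" "Min T \<in> T" using assms(2) large_finite large_nonempty Min_in by auto
  have "4 ^ Min T < x" if "K \<in> set Ks" "x \<in> K" for K x
  proof -
    have "x \<in> T - {Min T}" using Ks(3) that by blast
    then show ?thesis using exp_sparse_less[OF assms(1) T(2)] Min_le[OF T(1)] by force
  qed
  then show ?thesis using that Ks by blast
qed

lemma less_four_power: "n < (4::nat) ^ n"
  using less_exp[of n] power_mono[of "2::nat" 4 n] by (meson less_le_trans rel_simps)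

lemma exp_sparse_two_power_card_le:
  assumes "exp_sparse X" "Z \<subseteq> X" "finite Z" "y \<in> X" "\<forall>z\<in>Z. z < y"
  shows "2 ^ card Z \<le> y"
proof (cases "Z = {}")
  case True
  then show ?thesis using exp_sparse_ge_3[OF assms(1,4)] by simp
next
  case False
  define M where "M = Max Z"
  have M: "M \<in> Z" using assms(3) False by (simp add: M_def)
  have "card Z \<le> card {..M}"
    using assms(3) by (intro card_mono) (auto simp: M_def)
  then have "(2::nat) ^ card Z \<le> 2 ^ Suc M"
    by (intro power_increasing) auto
  also have "\<dots> \<le> 2 ^ (2 * M)"
    using exp_sparse_ge_3[OF assms(1), of M] M assms(2) by (intro power_increasing) auto
  also have "\<dots> = 4 ^ M"
    by (simp add: power_mult)
  also have "\<dots> < y"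
    using exp_sparse_less[OF assms(1) _ assms(4)] M assms(2,5) by blast
  finally show ?thesis by simp
qed

lemma two_mult_square_le_four_power: "2 * k * k \<le> (4::nat) ^ k"
proof (induction k)
  case (Suc k)
  have "4 * k + 2 \<le> 3 * (4::nat) ^ k"
  proof (induction k)
    case (Suc k)
    then show ?case using one_le_power[of "4::nat" k] by simp
  qed simp
  then show ?case using Suc by (simp add: algebra_simps)
qed simp

lemma four_power_less_imp_mult_double_le:
  assumes "(4::nat) ^ C < m" "4 ^ w < m"
  shows "C * (2 * w) \<le> m"
proof -
  let ?k = "max C w"
  have "C * (2 * w) \<le> 2 * ?k * ?k"
    using mult_le_mono[of C ?k w ?k] by simp
  also have "\<dots> \<le> 4 ^ ?k" by (rule two_mult_square_le_four_power)
  also have "\<dots> < m" using assms by (simp add: max_def)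
  finally show ?thesis by simp
qed

lemma pigeonhole_colour_class:
  assumes "finite A" "A \<noteq> {}"
  shows "\<exists>c\<in>f ` A. card A \<le> card {x\<in>A. f x = c} * card (f ` A)"
proof -
  have "\<exists>c\<in>f ` A. card A \<le> card (f -` {c} \<inter> A) * card (f ` A)"
    using assms by (intro pigeonhole_card) auto
  moreover have "f -` {c} \<inter> A = {x\<in>A. f x = c}" for c by blast
  ultimately show ?thesis by simp
qed

lemma pigeonhole_filter:
  assumes "set (map g xs) \<subseteq> S" "finite S" "S \<noteq> {}"
  shows "\<exists>c\<in>S. length xs \<le> length (filter (\<lambda>x. g x = c) xs) * card S"
proof -
  have "\<exists>c\<in>S. card {..<length xs} \<le> card ((\<lambda>i. g (xs ! i)) -` {c} \<inter> {..<length xs}) * card S"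
    using assms nth_mem by (intro pigeonhole_card) fastforce+
  moreover have "(\<lambda>i. g (xs ! i)) -` {c} \<inter> {..<length xs} = {i. i < length xs \<and> g (xs ! i) = c}" for c
    by auto
  ultimately show ?thesis by (simp add: length_filter_conv_card)
qed

(* The statement "the class of c is omega^j-large" is too weak to be proved by induction
   on j; goodness also allows one element of an earlier good block to be put in front. *)
definition good_colour :: "nat \<Rightarrow> nat set \<Rightarrow> (nat \<Rightarrow> 'c) \<Rightarrow> 'c \<Rightarrow> bool" where
  "good_colour j M f c \<longleftrightarrow> (\<forall>w. 4 ^ w < Min M \<longrightarrow> large [j] (insert w {x\<in>M. f x = c}))"

lemma good_colour_omega:
  assumes "large [1] M" "4 ^ card (f ` M) < Min M"
  shows "\<exists>c\<in>f ` M. good_colour 1 M f c"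
proof -
  have fin: "finite M" "M \<noteq> {}" using assms(1) large_finite large_nonempty by auto
  let ?C = "card (f ` M)"
  obtain c where c: "c \<in> f ` M" "card M \<le> card {x\<in>M. f x = c} * ?C"
    using pigeonhole_colour_class[of M f] fin by auto
  have "good_colour 1 M f c" unfolding good_colour_def
  proof (intro allI impI)
    fix w assume w: "4 ^ w < Min M"
    let ?A = "{x\<in>M. f x = c}"
    have "?C * w \<le> ?C * (2 * w)" by simp
    also have "\<dots> \<le> Min M" by (rule four_power_less_imp_mult_double_le[OF assms(2) w])
    also have "\<dots> < card M" using large_omega_iff[OF fin] assms(1) by simp
    also have "\<dots> \<le> ?C * card ?A" using c(2) by (simp add: mult.commute)
    finally have "w < card ?A" by simp
    have less: "\<forall>x\<in>?A. w < x"
      using less_four_power[of w] w Min_le[OF fin(1)] by fastforce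
    have "Min (insert w ?A) = w"
      using less fin(1) by (intro Min_eqI) (auto simp: less_imp_le)
    moreover have "card (insert w ?A) = Suc (card ?A)"
      using less fin(1) by (subst card_insert_disjoint) auto
    ultimately show "large [1] (insert w ?A)"
      using large_omega_iff[of "insert w ?A"] fin(1) \<open>w < card ?A\<close> by simp
  qed
  then show ?thesis using c(1) by blast
qed

lemma merge_block_pairs:
  assumes "sorted_wrt set_less Ks" "2 * w \<le> length Ks"
    and "\<And>K1 K2. K1 \<in> set Ks \<Longrightarrow> K2 \<in> set Ks \<Longrightarrow> set_less K1 K2 \<Longrightarrow> \<exists>P \<subseteq> K1 \<union> K2. Q P"
  obtains Ps where "length Ps = w" "sorted_wrt set_less Ps" "\<forall>P\<in>set Ps. P \<subseteq> \<Union>(set Ks) \<and> Q P"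
  using assms
proof (induction w arbitrary: Ks thesis)
  case 0
  then show ?case using 0(1)[of "[]"] by simp
next
  case (Suc w)
  obtain K1 K2 Ks' where Ks: "Ks = K1 # K2 # Ks'"
    using Suc.prems(3) by (cases Ks; cases "tl Ks") auto
  have "\<exists>P \<subseteq> K1 \<union> K2. Q P"
    using Suc.prems(2,4) Ks by simp
  then obtain P where P: "P \<subseteq> K1 \<union> K2" "Q P" by blast
  obtain Ps where Ps: "length Ps = w" "sorted_wrt set_less Ps" "\<forall>P\<in>set Ps. P \<subseteq> \<Union>(set Ks') \<and> Q P"
    using Suc.IH[of Ks'] Suc.prems(2-4) Ks by auto
  have "\<forall>P'\<in>set Ps. set_less P P'"
    using Suc.prems(2) Ks P(1) Ps(3) by (fastforce simp: set_less_def)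
  moreover have "\<forall>P'\<in>set (P # Ps). P' \<subseteq> \<Union>(set Ks)"
    using P(1) Ps(3) Ks by auto
  ultimately show ?case
    using P Ps by (intro Suc.prems(1)[of "P # Ps"]) auto
qed

lemma good_colour_blocks_large:
  assumes "exp_sparse M" "finite M" "sorted_wrt set_less Ls"
    and "\<forall>K\<in>set Ls. K \<subseteq> M \<and> c \<in> f ` K \<and> good_colour j K f c"
    and "2 * w \<le> length Ls" "\<forall>K\<in>set Ls. \<forall>x\<in>K. w < x"
  shows "large [Suc j] (insert w {x\<in>M. f x = c})"
proof -
  let ?A = "{x\<in>M. f x = c}"
  have pair: "\<exists>P \<subseteq> K1 \<union> K2. P \<subseteq> ?A \<and> large [j] P"
    if K: "K1 \<in> set Ls" "K2 \<in> set Ls" "set_less K1 K2" for K1 K2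
  proof -
    obtain z where z: "z \<in> K1" "f z = c" using assms(4) K(1) by blast
    have K2: "K2 \<subseteq> M" "finite K2" "K2 \<noteq> {}"
      using assms(2,4) K(2) finite_subset by fastforce+
    have "z < Min K2" using K(3) z(1) K2(2,3) by (simp add: set_less_def)
    then have "4 ^ z < Min K2"
      using exp_sparse_less[OF assms(1)] z(1) K(1) K2 assms(4) by (meson Min_in subsetD)
    then have "large [j] (insert z {x\<in>K2. f x = c})"
      using assms(4) K(2) by (simp add: good_colour_def)
    moreover have "insert z {x\<in>K2. f x = c} \<subseteq> ?A"
      using z K(1) K2(1) assms(4) by blast
    ultimately show ?thesis using z(1) by (intro exI[of _ "insert z {x\<in>K2. f x = c}"]) auto
  qed
  obtain Ps where Ps: "length Ps = w" "sorted_wrt set_less Ps"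
    "\<forall>P\<in>set Ps. P \<subseteq> \<Union>(set Ls) \<and> P \<subseteq> ?A \<and> large [j] P"
    using merge_block_pairs[OF assms(3,5) pair] by blast
  have "large [Suc j] (insert w (\<Union>(set Ps)))"
    using Ps assms(6) by (intro large_Suc_insertI) fastforce+
  then show ?thesis
    by (rule large_mono) (use Ps assms(2) in auto)
qed

lemma good_colour_Suc:
  assumes IH: "\<And>K. exp_sparse K \<Longrightarrow> large [j] K \<Longrightarrow> 4 ^ card (f ` K) < Min K
      \<Longrightarrow> \<exists>c\<in>f ` K. good_colour j K f c"
    and M: "exp_sparse M" "large [Suc j] M" "4 ^ card (f ` M) < Min M"
  shows "\<exists>c\<in>f ` M. good_colour (Suc j) M f c"
proof -
  let ?m = "Min M" and ?C = "card (f ` M)"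
  have fin: "finite M" "M \<noteq> {}" using M(2) large_finite large_nonempty by auto
  obtain Ks where Ks: "length Ks = ?m" "sorted_wrt set_less Ks"
    "\<forall>K\<in>set Ks. K \<subseteq> M - {?m} \<and> large [j] K \<and> (\<forall>x\<in>K. 4 ^ ?m < x)"
    using exp_sparse_large_Suc_blocks[OF M(1,2)] by blast
  have above: "?m < x" if "K \<in> set Ks" "x \<in> K" for K x
    using Ks(3) that less_four_power[of ?m] less_trans by blast
  have "\<exists>c\<in>f ` K. good_colour j K f c" if K: "K \<in> set Ks" for K
  proof (rule IH)
    have K': "K \<subseteq> M - {?m}" "large [j] K" "\<forall>x\<in>K. 4 ^ ?m < x" using Ks(3) K by simp_all
    then have "K \<subseteq> M" "K \<noteq> {}" "finite K" using large_nonempty large_finite by auto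
    then show "exp_sparse K" "large [j] K" using exp_sparse_subset[OF M(1)] K'(2) by simp_all
    have "card (f ` K) \<le> ?C" using \<open>K \<subseteq> M\<close> fin(1) by (intro card_mono) auto
    then have "(4::nat) ^ card (f ` K) \<le> 4 ^ ?C" by simp
    also have "\<dots> < ?m" using M(3) .
    also have "\<dots> < 4 ^ ?m" by (rule less_four_power)
    also have "\<dots> < Min K" using K'(3) Min_in[OF \<open>finite K\<close> \<open>K \<noteq> {}\<close>] by blast
    finally show "4 ^ card (f ` K) < Min K" .
  qed
  then obtain cf where cf: "\<forall>K\<in>set Ks. cf K \<in> f ` K \<and> good_colour j K f (cf K)"
    by metis
  have "set (map cf Ks) \<subseteq> f ` M" using cf Ks(3) by fastforce
  then obtain cs where cs: "cs \<in> f ` M" "length Ks \<le> length (filter (\<lambda>K. cf K = cs) Ks) * ?C"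
    using pigeonhole_filter[of cf Ks "f ` M"] fin by auto
  let ?Ls = "filter (\<lambda>K. cf K = cs) Ks"
  have "good_colour (Suc j) M f cs" unfolding good_colour_def
  proof (intro allI impI)
    fix w assume w: "4 ^ w < ?m"
    have "?C * (2 * w) \<le> ?m" by (rule four_power_less_imp_mult_double_le[OF M(3) w])
    also have "\<dots> \<le> ?C * length ?Ls" using cs(2) Ks(1) by (simp add: mult.commute)
    finally have "2 * w \<le> length ?Ls" using fin by (simp add: card_gt_0_iff)
    moreover have "w < x" if "K \<in> set ?Ls" "x \<in> K" for K x
      using above[of K x] that less_four_power[of w] w by simp
    ultimately show "large [Suc j] (insert w {x\<in>M. f x = cs})"
      using Ks cf M(1) fin(1)
      by (intro good_colour_blocks_large) (auto intro: sorted_wrt_filter)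
  qed
  then show ?thesis using cs(1) by blast
qed

lemma good_colour_exists:
  "1 \<le> j \<Longrightarrow> exp_sparse M \<Longrightarrow> large [j] M \<Longrightarrow> 4 ^ card (f ` M) < Min M
    \<Longrightarrow> \<exists>c\<in>f ` M. good_colour j M f c"
proof (induction j arbitrary: M rule: nat_induct_at_least)
  case base
  then show ?case using good_colour_omega by blast
next
  case (Suc j)
  then show ?case using good_colour_Suc by blast
qed

lemma not_distinct_nth:
  assumes "\<not> distinct xs"
  obtains i j where "i < j" "j < length xs" "xs ! i = xs ! j"
proof -
  obtain i j where "i < length xs" "j < length xs" "i \<noteq> j" "xs ! i = xs ! j"
    using assms by (auto simp: distinct_conv_nth)
  then show ?thesis
    using that by (cases "i < j") (auto simp: not_less_iff_gr_or_eq)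
qed

lemma colour_repeats_before_block:
  assumes "sorted_wrt set_less Ks" "\<forall>K\<in>set Ks. K \<subseteq> T \<and> cf K \<in> f ` K"
    and "t \<in> T" "\<forall>K\<in>set Ks. \<forall>x\<in>K. t < x" "finite T" "card (f ` T) \<le> length Ks"
  obtains K z where "K \<in> set Ks" "z \<in> T" "f z = cf K" "\<forall>y\<in>K. z < y"
proof -
  let ?cs = "f t # map cf Ks"
  have "set ?cs \<subseteq> f ` T" using assms(2,3) by auto
  then have "card (set ?cs) < length ?cs"
    using card_mono[of "f ` T" "set ?cs"] assms(5,6) by simp
  then have "\<not> distinct ?cs" using distinct_card by fastforce
  then obtain p q where pq: "p < q" "q < length ?cs" "?cs ! p = ?cs ! q"
    by (rule not_distinct_nth)
  define K where "K = Ks ! (q - 1)"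
  have K: "K \<in> set Ks" using pq(1,2) by (simp add: K_def)
  show ?thesis
  proof (cases p)
    case 0
    then show ?thesis
      using that[OF K assms(3)] assms(4) K pq by (simp add: K_def nth_Cons')
  next
    case (Suc p')
    then have p': "p' < q - 1" "q - 1 < length Ks" using pq(1,2) by auto
    have "cf (Ks ! p') \<in> f ` (Ks ! p')" using assms(2) p' by simp
    moreover have "set_less (Ks ! p') K" using assms(1) p' by (simp add: K_def sorted_wrt_iff_nth_less)
    moreover have "cf (Ks ! p') = cf K" using pq(1,3) Suc p' by (simp add: K_def nth_Cons')
    ultimately obtain z where "z \<in> Ks ! p'" "f z = cf K" "\<forall>y\<in>K. z < y"
      by (auto simp: set_less_def)
    moreover have "Ks ! p' \<in> set Ks" using p' by simp
    ultimately show ?thesis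
      using that[OF K] assms(2) by blast
  qed
qed

lemma large_Suc_pigeonhole:
  assumes T: "exp_sparse T" "large [Suc a] T" and few: "card (f ` T) \<le> Min T"
  obtains c where "large [a] {x\<in>T. f x = c}"
proof -
  let ?t = "Min T"
  have fin: "finite T" "T \<noteq> {}" using T(2) large_finite large_nonempty by auto
  obtain Ks where Ks: "length Ks = ?t" "sorted_wrt set_less Ks"
    "\<forall>K\<in>set Ks. K \<subseteq> T - {?t} \<and> large [a] K \<and> (\<forall>x\<in>K. 4 ^ ?t < x)"
    using exp_sparse_large_Suc_blocks[OF T] by blast
  have K: "K \<subseteq> T" "K \<noteq> {}" "finite K" "4 ^ ?t < Min K" if "K \<in> set Ks" for K
  proof -
    have KT: "K \<subseteq> T - {?t}" "large [a] K" "\<forall>x\<in>K. 4 ^ ?t < x" using Ks(3) that by simp_all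
    then show K: "K \<subseteq> T" "K \<noteq> {}" "finite K" using large_nonempty large_finite by auto
    then show "4 ^ ?t < Min K" using KT(3) Min_in by blast
  qed
  show ?thesis
  proof (cases "a = 0")
    case True
    then show ?thesis
      using that[of "f ?t"] large_exp_zeroI[of "{x\<in>T. f x = f ?t}"] fin Min_in by fastforce
  next
    case False
    have "\<exists>c\<in>f ` K. good_colour a K f c" if "K \<in> set Ks" for K
    proof (rule good_colour_exists)
      have "card (f ` K) \<le> card (f ` T)" using K(1)[OF that] fin(1) by (intro card_mono) auto
      then have "(4::nat) ^ card (f ` K) \<le> 4 ^ ?t" using few by (intro power_increasing) simp_all
      then show "4 ^ card (f ` K) < Min K" using K(4)[OF that] by linarith
    qed (use False Ks(3) that exp_sparse_subset[OF T(1) K(1)[OF that]] in auto)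
    then obtain cf where cf: "\<forall>K\<in>set Ks. cf K \<in> f ` K \<and> good_colour a K f (cf K)"
      by metis
    have coloured: "\<forall>K\<in>set Ks. K \<subseteq> T \<and> cf K \<in> f ` K" using cf K(1) by blast
    have above: "\<forall>K\<in>set Ks. \<forall>x\<in>K. ?t < x"
      using Ks(3) less_four_power[of ?t] less_trans by blast
    obtain K z where Kz: "K \<in> set Ks" "z \<in> T" "f z = cf K" "\<forall>y\<in>K. z < y"
      using colour_repeats_before_block[OF Ks(2) coloured Min_in[OF fin] above fin(1)] few Ks(1)
      by auto
    have "4 ^ z < Min K"
      using exp_sparse_less[OF T(1) Kz(2)] Kz(1,4) K(1-3) by (meson Min_in subsetD)
    then have "large [a] (insert z {x\<in>K. f x = cf K})"
      using cf Kz(1) by (simp add: good_colour_def)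
    then have "large [a] {x\<in>T. f x = cf K}"
      by (rule large_mono) (use Kz K(1)[OF Kz(1)] fin(1) in auto)
    then show ?thesis by (rule that)
  qed
qed

definition homogeneous :: "(nat \<Rightarrow> nat \<Rightarrow> bool) \<Rightarrow> nat set \<Rightarrow> nat set \<Rightarrow> bool" where
  "homogeneous P A B \<longleftrightarrow> (\<forall>x\<in>A. \<forall>x'\<in>A. \<forall>y\<in>B. \<forall>y'\<in>B. P x y = P x' y')"

lemma homogeneous_subset:
  "homogeneous P A B \<Longrightarrow> A' \<subseteq> A \<Longrightarrow> B' \<subseteq> B \<Longrightarrow> homogeneous P A' B'"
  unfolding homogeneous_def by blast

lemma sorted_wrt_map_upt:
  "(\<And>i j. i < j \<Longrightarrow> j < n \<Longrightarrow> R (f i) (f j)) \<Longrightarrow> sorted_wrt R (map f [0..<n])"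
  by (simp add: sorted_wrt_iff_nth_less)

lemma large_Suc_pigeonhole_Pow:
  assumes "exp_sparse T" "large [Suc a] T" "finite A" "\<forall>x\<in>T. f x \<subseteq> A" "2 ^ card A \<le> Min T"
  obtains U where "large [a] {x\<in>T. f x = U}"
proof -
  have "card (f ` T) \<le> card (Pow A)" using assms(3,4) by (intro card_mono) auto
  then have "card (f ` T) \<le> Min T" using assms(3,5) by (simp add: card_Pow)
  then show ?thesis using large_Suc_pigeonhole[OF assms(1,2)] that by blast
qed

lemma homogeneous_pair_refinement:
  assumes X: "exp_sparse X" "A \<subseteq> X" "B \<subseteq> X" "set_less A B"
    and large: "large [Suc a] A" "large [Suc b] B"
  obtains F R where "F \<subseteq> A" "R \<subseteq> B" "large [a] F" "large [b] R" "homogeneous P F R"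
proof -
  have fin: "finite A" "A \<noteq> {}" "finite B" "B \<noteq> {}"
    using large large_finite large_nonempty by auto
  have "Min B \<in> B" using Min_in[OF fin(3,4)] .
  then have "\<forall>z\<in>A. z < Min B" "Min B \<in> X" using X(3,4) by (auto simp: set_less_def)
  then have "2 ^ card A \<le> Min B"
    using exp_sparse_two_power_card_le[OF X(1,2) fin(1)] by blast
  moreover have "exp_sparse B" using exp_sparse_subset[OF X(1,3)] .
  ultimately obtain U where U: "large [b] {y\<in>B. {x\<in>A. P x y} = U}"
    using large_Suc_pigeonhole_Pow[of B b A "\<lambda>y. {x\<in>A. P x y}"] large(2) fin(1) by blast
  have "card ((\<lambda>x. x \<in> U) ` A) \<le> card (UNIV :: bool set)" by (rule card_mono) auto
  also have "\<dots> \<le> Min A"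
    using exp_sparse_ge_3[OF X(1), of "Min A"] Min_in[OF fin(1,2)] X(2) by auto
  finally obtain c where c: "large [a] {x\<in>A. (x \<in> U) = c}"
    using large_Suc_pigeonhole[OF exp_sparse_subset[OF X(1,2)] large(1)] by blast
  have "homogeneous P {x\<in>A. (x \<in> U) = c} {y\<in>B. {x\<in>A. P x y} = U}"
    unfolding homogeneous_def by blast
  then show ?thesis using that[OF _ _ c U] by blast
qed

lemma left_determined_refinement:
  assumes "exp_sparse X" "sorted_wrt set_less Ws" "\<forall>W\<in>set Ws. W \<subseteq> X \<and> large [Suc a] W"
  obtains V U where "\<forall>j<length Ws. V j \<subseteq> Ws ! j \<and> large [a] (V j)"
    "\<forall>i j x y. i < j \<longrightarrow> j < length Ws \<longrightarrow> x \<in> Ws ! i \<longrightarrow> y \<in> V j \<longrightarrow> P x y = (x \<in> U j)"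
proof -
  define L where "L j = (\<Union>i<j. Ws ! i)" for j
  define col where "col j y = {x\<in>L j. P x y}" for j y
  have "\<exists>U. large [a] {y\<in>Ws ! j. col j y = U}" if j: "j < length Ws" for j
  proof -
    let ?W = "Ws ! j"
    have W: "?W \<subseteq> X" "large [Suc a] ?W" using assms(3) j by auto
    then have W: "?W \<subseteq> X" "large [Suc a] ?W" "finite ?W" "?W \<noteq> {}"
      using large_finite[OF W(2)] large_nonempty[OF W(2)] by auto
    have "Ws ! i \<subseteq> X \<and> finite (Ws ! i) \<and> set_less (Ws ! i) ?W" if "i < j" for i
    proof -
      have "Ws ! i \<subseteq> X" "large [Suc a] (Ws ! i)" using assms(3) j that by simp_all
      then show ?thesis using assms(2) j that large_finite by (simp add: sorted_wrt_iff_nth_less)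
    qed
    then have L: "L j \<subseteq> X" "finite (L j)" "\<forall>z\<in>L j. z < Min ?W"
      using Min_in[OF W(3,4)] by (auto simp: L_def set_less_def)
    have "2 ^ card (L j) \<le> Min ?W"
      using exp_sparse_two_power_card_le[OF assms(1) L(1,2)] Min_in[OF W(3,4)] W(1) L(3) by blast
    then show ?thesis
      using large_Suc_pigeonhole_Pow[of ?W a "L j" "col j"] exp_sparse_subset[OF assms(1) W(1)] W(2) L(2)
      unfolding col_def by blast
  qed
  then obtain U where U: "\<And>j. j < length Ws \<Longrightarrow> large [a] {y\<in>Ws ! j. col j y = U j}"
    by metis
  have "P x y = (x \<in> U j)"
    if "i < j" "x \<in> Ws ! i" "y \<in> {y\<in>Ws ! j. col j y = U j}" for i j x y
  proof -
    have "x \<in> L j" using that(1,2) by (auto simp: L_def)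
    then show ?thesis using that(3) by (auto simp: col_def)
  qed
  then show ?thesis
    using that[of "\<lambda>j. {y\<in>Ws ! j. col j y = U j}" U] U by blast
qed

lemma homogeneous_refinement:
  assumes "\<forall>j<s. exp_sparse (V j) \<and> large [Suc a] (V j) \<and> 2 ^ s \<le> Min (V j)"
    and "\<forall>i j x y. i < j \<longrightarrow> j < s \<longrightarrow> x \<in> V i \<longrightarrow> y \<in> V j \<longrightarrow> P x y = (x \<in> U j)"
  obtains F where "\<forall>j<s. F j \<subseteq> V j \<and> large [a] (F j)"
    "\<forall>i j. i < j \<longrightarrow> j < s \<longrightarrow> homogeneous P (F i) (F j)"
proof -
  define g where "g x = {j\<in>{..<s}. x \<in> U j}" for x
  have "\<exists>Q. large [a] {x\<in>V j. g x = Q}" if "j < s" for j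
    using large_Suc_pigeonhole_Pow[of "V j" a "{..<s}" g] assms(1) that by (auto simp: g_def)
  then obtain Q where Q: "\<forall>j<s. large [a] {x\<in>V j. g x = Q j}" by metis
  have "homogeneous P {x\<in>V i. g x = Q i} {x\<in>V j. g x = Q j}" if "i < j" "j < s" for i j
  proof -
    have "P x y = (j \<in> Q i)" if "x \<in> V i" "g x = Q i" "y \<in> V j" for x y
      using assms(2) \<open>i < j\<close> \<open>j < s\<close> that by (auto simp: g_def)
    then show ?thesis unfolding homogeneous_def by blast
  qed
  then show ?thesis
    using that[of "\<lambda>j. {x\<in>V j. g x = Q j}"] Q by blast
qed

lemma homogeneous_blocks:
  assumes R: "exp_sparse R" "large [Suc (Suc (Suc a))] R" and s: "2 ^ s \<le> Min R"
  obtains Fs where "length Fs = s" "sorted_wrt set_less Fs" "sorted_wrt (homogeneous P) Fs"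
    "\<forall>F\<in>set Fs. F \<subseteq> R \<and> large [a] F"
proof -
  obtain Ws0 where Ws0: "length Ws0 = Min R" "sorted_wrt set_less Ws0"
    "\<forall>W\<in>set Ws0. W \<subseteq> R - {Min R} \<and> large [Suc (Suc a)] W"
    using large_Suc_blocks[OF R(2)] by blast
  define Ws where "Ws = take s Ws0"
  have "s < Min R" using less_exp[of s] s by linarith
  have Ws: "length Ws = s" "sorted_wrt set_less Ws" "\<forall>W\<in>set Ws. W \<subseteq> R \<and> large [Suc (Suc a)] W"
    using Ws0 \<open>s < Min R\<close> by (auto simp: Ws_def min_def sorted_wrt_take dest: in_set_takeD)
  obtain V U where V: "\<forall>j<s. V j \<subseteq> Ws ! j \<and> large [Suc a] (V j)"
    and U: "\<forall>i j x y. i < j \<longrightarrow> j < s \<longrightarrow> x \<in> Ws ! i \<longrightarrow> y \<in> V j \<longrightarrow> P x y = (x \<in> U j)"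
    using left_determined_refinement[OF R(1) Ws(2,3)] unfolding Ws(1) by blast
  have VR: "V j \<subseteq> R" if "j < s" for j using V Ws that by (meson nth_mem subset_trans)
  have "exp_sparse (V j) \<and> large [Suc a] (V j) \<and> 2 ^ s \<le> Min (V j)" if "j < s" for j
  proof -
    have "V j \<noteq> {}" "finite (V j)" using V that large_nonempty large_finite by blast+
    then have "Min R \<le> Min (V j)"
      using Min_antimono[OF VR[OF that] _ large_finite[OF R(2)]] by simp
    then show ?thesis using exp_sparse_subset[OF R(1) VR[OF that]] V that s by auto
  qed
  then have V_props: "\<forall>j<s. exp_sparse (V j) \<and> large [Suc a] (V j) \<and> 2 ^ s \<le> Min (V j)"
    by blast
  have "P x y = (x \<in> U j)" if "i < j" "j < s" "x \<in> V i" "y \<in> V j" for i j x y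
  proof -
    have "V i \<subseteq> Ws ! i" using V that(1,2) by simp
    then show ?thesis using U that by blast
  qed
  then obtain F where F: "\<forall>j<s. F j \<subseteq> V j \<and> large [a] (F j)"
    "\<forall>i j. i < j \<longrightarrow> j < s \<longrightarrow> homogeneous P (F i) (F j)"
    using homogeneous_refinement[OF V_props, of P U] by blast
  have "set_less (F i) (F j)" if "i < j" "j < s" for i j
  proof -
    have "F i \<subseteq> V i" "V i \<subseteq> Ws ! i" "F j \<subseteq> V j" "V j \<subseteq> Ws ! j" using V F(1) that by simp_all
    then have "F i \<subseteq> Ws ! i" "F j \<subseteq> Ws ! j" by blast+
    moreover have "set_less (Ws ! i) (Ws ! j)" using Ws(1,2) that by (simp add: sorted_wrt_iff_nth_less)
    ultimately show ?thesis using set_less_subset by blast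
  qed
  then have "sorted_wrt set_less (map F [0..<s])" by (rule sorted_wrt_map_upt)
  moreover have "sorted_wrt (homogeneous P) (map F [0..<s])" using F(2) by (intro sorted_wrt_map_upt) simp
  moreover have "\<forall>G\<in>set (map F [0..<s]). G \<subseteq> R \<and> large [a] G" using F(1) VR by fastforce
  ultimately show ?thesis using that[of "map F [0..<s]"] by simp
qed

definition grouping_list ::
  "ord_cnf \<Rightarrow> ord_cnf \<Rightarrow> nat set \<Rightarrow> (nat \<Rightarrow> nat \<Rightarrow> bool) \<Rightarrow> nat set list \<Rightarrow> bool" where
  "grouping_list \<alpha> \<beta> X P Gs \<longleftrightarrow>
     (\<forall>G\<in>set Gs. G \<subseteq> X \<and> large \<alpha> G) \<and> sorted_wrt set_less Gs \<and>
     sorted_wrt (homogeneous P) Gs \<and> large \<beta> (Max ` set Gs)"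

lemma sorted_wrt_map_Max:
  assumes "sorted_wrt set_less Gs" "\<forall>G\<in>set Gs. finite G \<and> G \<noteq> {}"
  shows "sorted_wrt (<) (map Max Gs)"
  unfolding sorted_wrt_map using assms(1)
proof (rule sorted_wrt_mono_rel[rotated])
  fix A B assume "A \<in> set Gs" "B \<in> set Gs" "set_less A B"
  then show "Max A < Max B" using assms(2) by (simp add: set_less_def)
qed

lemma large_omega_Maxes_iff:
  assumes "sorted_wrt set_less (F # Fs)" "\<forall>G\<in>set (F # Fs). finite G \<and> G \<noteq> {}"
  shows "large [1] (Max ` set (F # Fs)) \<longleftrightarrow> Max F \<le> length Fs"
proof -
  let ?M = "Max ` set (F # Fs)"
  have sorted: "sorted_wrt (<) (map Max (F # Fs))" by (rule sorted_wrt_map_Max[OF assms])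
  then have "Min ?M = Max F" by (intro Min_eqI) (auto simp: less_imp_le)
  moreover have "distinct (map Max (F # Fs))" using sorted strict_sorted_iff by blast
  then have "card ?M = Suc (length Fs)" using distinct_card by fastforce
  ultimately show ?thesis using large_omega_iff[of ?M] by simp
qed

lemma exp_sparse_homogeneous_pair:
  assumes X: "exp_sparse X" "large [a + 6] X"
  obtains F0 R where "F0 \<subseteq> X" "R \<subseteq> X" "set_less F0 R" "large [a] F0"
    "large [Suc (Suc (Suc a))] R" "homogeneous P F0 R"
proof -
  have fin: "finite X" "X \<noteq> {}" using X(2) large_finite large_nonempty by auto
  have "large [Suc (a + 5)] X" using X(2) by (simp add: add.commute)
  then obtain Ks where Ks: "length Ks = Min X" "sorted_wrt set_less Ks"
    "\<forall>K\<in>set Ks. K \<subseteq> X - {Min X} \<and> large [a + 5] K"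
    by (rule large_Suc_blocks)
  have "1 < length Ks" using exp_sparse_ge_3[OF X(1) Min_in[OF fin]] Ks(1) by simp
  then have "Ks ! 0 \<in> set Ks" "Ks ! 1 \<in> set Ks" "set_less (Ks ! 0) (Ks ! 1)"
    using Ks(2) by (auto intro!: nth_mem simp: sorted_wrt_iff_nth_less)
  then have blocks: "Ks ! 0 \<subseteq> X" "Ks ! 1 \<subseteq> X" "set_less (Ks ! 0) (Ks ! 1)"
    "large [a + 5] (Ks ! 0)" "large [a + 5] (Ks ! 1)"
    using Ks(3) by blast+
  obtain F0 R where F0R: "F0 \<subseteq> Ks ! 0" "R \<subseteq> Ks ! 1" "large [a] F0"
    "large [Suc (Suc (Suc a))] R" "homogeneous P F0 R"
    using homogeneous_pair_refinement[OF X(1) blocks(1-3), of a "Suc (Suc (Suc a))" P]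
      large_exp_le[OF blocks(4)] large_exp_le[OF blocks(5)] by auto
  have "F0 \<subseteq> X" "R \<subseteq> X" using F0R(1,2) blocks(1,2) by blast+
  moreover have "set_less F0 R" using set_less_subset[OF blocks(3) F0R(1,2)] .
  ultimately show ?thesis using that F0R(3-5) by blast
qed

lemma grouping_list_omega_exists:
  assumes X: "exp_sparse X" "large [a + 6] X"
  obtains Fs where "grouping_list [a] [1] X P Fs"
proof -
  obtain F0 R where F0R: "F0 \<subseteq> X" "R \<subseteq> X" "set_less F0 R" "large [a] F0"
    "large [Suc (Suc (Suc a))] R" "homogeneous P F0 R"
    using exp_sparse_homogeneous_pair[OF X] by blast
  have F0: "finite F0" "F0 \<noteq> {}" and R: "finite R" "R \<noteq> {}"
    using F0R(4,5) large_finite large_nonempty by auto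
  have "Max F0 < Min R"
    using F0R(3) Max_in[OF F0] Min_in[OF R] by (simp add: set_less_def)
  then have "4 ^ Max F0 < Min R"
    using exp_sparse_less[OF X(1)] Max_in[OF F0] Min_in[OF R] F0R(1,2) by blast
  then have "2 ^ Max F0 \<le> Min R"
    using power_mono[of "2::nat" 4 "Max F0"] by simp
  then obtain Fs where Fs: "length Fs = Max F0" "sorted_wrt set_less Fs"
    "sorted_wrt (homogeneous P) Fs" "\<forall>F\<in>set Fs. F \<subseteq> R \<and> large [a] F"
    using homogeneous_blocks[OF exp_sparse_subset[OF X(1) F0R(2)] F0R(5)] by blast
  have F: "F \<subseteq> X" "finite F" "F \<noteq> {}" "set_less F0 F" "homogeneous P F0 F"
    if "F \<in> set Fs" for F
  proof -
    have "F \<subseteq> R" "large [a] F" using Fs(4) that by simp_all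
    then show "F \<subseteq> X" "finite F" "F \<noteq> {}" "set_less F0 F" "homogeneous P F0 F"
      using F0R(2) large_finite large_nonempty set_less_subset[OF F0R(3) order_refl]
        homogeneous_subset[OF F0R(6) order_refl] by simp_all
  qed
  have "large [1] (Max ` set (F0 # Fs))"
    using large_omega_Maxes_iff[of F0 Fs] Fs(1,2) F F0 by simp
  then have "grouping_list [a] [1] X P (F0 # Fs)"
    using Fs(2-4) F F0R(1,4) by (simp add: grouping_list_def)
  then show ?thesis by (rule that)
qed

lemma sorted_wrt_concat_refine:
  assumes mono: "\<And>A B A' B'. R A B \<Longrightarrow> A' \<subseteq> A \<Longrightarrow> B' \<subseteq> B \<Longrightarrow> R A' B'"
    and "sorted_wrt R Fs" "\<forall>F\<in>set Fs. sorted_wrt R (Gs F) \<and> (\<forall>G\<in>set (Gs F). G \<subseteq> F)"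
  shows "sorted_wrt R (concat (map Gs Fs))"
  using assms(2,3)
proof (induction Fs)
  case (Cons F Fs)
  have "R G G'" if "G \<in> set (Gs F)" "F' \<in> set Fs" "G' \<in> set (Gs F')" for G F' G'
    using mono Cons.prems that by auto
  then show ?case using Cons by (auto simp: sorted_wrt_append)
qed simp

lemma Max_image_subset: "\<forall>G\<in>S. finite G \<and> G \<noteq> {} \<and> G \<subseteq> F \<Longrightarrow> Max ` S \<subseteq> F"
  using Max_in by blast

lemma large_Maxes_concat:
  assumes Fs: "sorted_wrt set_less Fs" "large [1] (Max ` set Fs)"
    and Gs: "\<forall>F\<in>set Fs. finite F \<and> F \<noteq> {} \<and> large [k] (Max ` set (Gs F))
      \<and> (\<forall>G\<in>set (Gs F). finite G \<and> G \<noteq> {} \<and> G \<subseteq> F)"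
  shows "large [Suc k] (Max ` set (concat (map Gs Fs)))"
proof -
  obtain F0 Fs' where F0: "Fs = F0 # Fs'"
    using Fs(2) large_nonempty by (cases Fs) auto
  have "Gs F0 \<noteq> []" using Gs F0 large_nonempty[of "[k]" "Max ` set (Gs F0)"] by auto
  then obtain G0 where G0: "G0 \<in> set (Gs F0)" using hd_in_set by blast
  let ?w = "Max G0"
  have G0F0: "G0 \<subseteq> F0" "finite G0" "G0 \<noteq> {}" "finite F0" using Gs F0 G0 by auto
  have "?w \<le> Max F0" using Max_mono[OF G0F0(1,3,4)] .
  also have "Max F0 \<le> length Fs'"
    using large_omega_Maxes_iff[of F0 Fs'] Fs F0 Gs by auto
  finally have w: "?w \<le> length Fs'" .
  let ?Ks = "map (\<lambda>F. Max ` set (Gs F)) Fs'"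
  have Max_sub: "Max ` set (Gs F) \<subseteq> F" if "F \<in> set Fs" for F
    using Gs that by (intro Max_image_subset) simp
  have "sorted_wrt set_less Fs'" using Fs(1) F0 by simp
  then have Ks_sorted: "sorted_wrt set_less ?Ks"
    unfolding sorted_wrt_map
    by (rule sorted_wrt_mono_rel[rotated]) (metis F0 Max_sub list.set_intros(2) set_less_subset)
  have Ks_large: "\<forall>K\<in>set ?Ks. large [k] K \<and> (\<forall>x\<in>K. ?w < x)"
  proof
    fix K assume K: "K \<in> set ?Ks"
    obtain F where F: "F \<in> set Fs'" "K = Max ` set (Gs F)" using K by auto
    have "set_less F0 F" using Fs(1) F0 F(1) by simp
    then have "\<forall>x\<in>K. ?w < x"
      using Max_sub[of F] F F0 Max_in[OF G0F0(2,3)] G0F0(1) by (auto simp: set_less_def)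
    then show "large [k] K \<and> (\<forall>x\<in>K. ?w < x)" using Gs F F0 by simp
  qed
  have "large [Suc k] (insert ?w (\<Union>(set ?Ks)))"
    using large_Suc_insertI[OF Ks_sorted Ks_large] w by simp
  moreover have "insert ?w (\<Union>(set ?Ks)) \<subseteq> Max ` set (concat (map Gs Fs))"
  proof -
    have "Max ` set (Gs F) \<subseteq> Max ` set (concat (map Gs Fs))" if "F \<in> set Fs" for F
      using that by (intro image_mono) auto
    then show ?thesis using F0 G0 by (simp add: UN_least)
  qed
  ultimately show ?thesis by (rule large_mono) simp
qed

lemma grouping_list_concat:
  assumes outer: "grouping_list \<alpha> [1] X P Fs" "\<alpha> \<noteq> []"
    and inner: "\<forall>F\<in>set Fs. grouping_list \<beta> [k] F P (Gs F)" "\<beta> \<noteq> []"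
  shows "grouping_list \<beta> [Suc k] X P (concat (map Gs Fs))"
proof -
  have Fs: "\<forall>F\<in>set Fs. F \<subseteq> X \<and> large \<alpha> F" "sorted_wrt set_less Fs"
    "sorted_wrt (homogeneous P) Fs" "large [1] (Max ` set Fs)"
    using outer by (simp_all add: grouping_list_def)
  have Gs: "\<forall>G\<in>set (Gs F). G \<subseteq> F \<and> large \<beta> G" "sorted_wrt set_less (Gs F)"
    "sorted_wrt (homogeneous P) (Gs F)" "large [k] (Max ` set (Gs F))" if "F \<in> set Fs" for F
    using inner that by (simp_all add: grouping_list_def)
  have "\<forall>F\<in>set Fs. finite F \<and> F \<noteq> {} \<and> large [k] (Max ` set (Gs F))
      \<and> (\<forall>G\<in>set (Gs F). finite G \<and> G \<noteq> {} \<and> G \<subseteq> F)"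
  proof
    fix F assume F: "F \<in> set Fs"
    have "finite G \<and> G \<noteq> {}" if "G \<in> set (Gs F)" for G
      using Gs(1)[OF F] that large_finite large_nonempty[OF _ inner(2)] by blast
    moreover have "finite F" "F \<noteq> {}"
      using Fs(1) F large_finite large_nonempty[OF _ outer(2)] by blast+
    ultimately show "finite F \<and> F \<noteq> {} \<and> large [k] (Max ` set (Gs F))
      \<and> (\<forall>G\<in>set (Gs F). finite G \<and> G \<noteq> {} \<and> G \<subseteq> F)"
      using Gs(1,4)[OF F] by blast
  qed
  then have "large [Suc k] (Max ` set (concat (map Gs Fs)))"
    by (rule large_Maxes_concat[OF Fs(2,4)])
  moreover have "\<forall>G\<in>set (concat (map Gs Fs)). G \<subseteq> X \<and> large \<beta> G"
    using Fs(1) Gs(1) by fastforce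
  moreover have "sorted_wrt set_less (concat (map Gs Fs))"
    using set_less_subset Fs(2) Gs(1,2) by (intro sorted_wrt_concat_refine) auto
  moreover have "sorted_wrt (homogeneous P) (concat (map Gs Fs))"
    using homogeneous_subset Fs(3) Gs(1,3) by (intro sorted_wrt_concat_refine) auto
  ultimately show ?thesis unfolding grouping_list_def by blast
qed

lemma grouping_list_exists:
  "exp_sparse X \<Longrightarrow> large [n + 6 * k] X \<Longrightarrow> \<exists>Gs. grouping_list [n] [k] X P Gs"
proof (induction k arbitrary: X)
  case 0
  then have "finite X" "X \<noteq> {}" using large_finite large_nonempty by auto
  then have "grouping_list [n] [0] X P [X]"
    using 0 large_exp_zeroI[of "{Max X}"] by (simp add: grouping_list_def)
  then show ?case by blast
next
  case (Suc k)
  have "n + 6 * Suc k = (n + 6 * k) + 6" by simp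
  then have "large [(n + 6 * k) + 6] X" using Suc.prems(2) by metis
  then obtain Fs where Fs: "grouping_list [n + 6 * k] [1] X P Fs"
    using grouping_list_omega_exists[OF Suc.prems(1)] by blast
  have "\<exists>Gs. grouping_list [n] [k] F P Gs" if "F \<in> set Fs" for F
    using Suc.IH exp_sparse_subset[OF Suc.prems(1)] Fs that by (simp add: grouping_list_def)
  then obtain Gs where "\<forall>F\<in>set Fs. grouping_list [n] [k] F P (Gs F)" by metis
  then have "grouping_list [n] [Suc k] X P (concat (map Gs Fs))"
    using grouping_list_concat[OF Fs] by simp
  then show ?case by blast
qed

lemma grouping_list_grouping:
  assumes "grouping_list \<alpha> \<beta> X P Gs" "\<alpha> \<noteq> []"
  shows "grouping \<alpha> \<beta> X P (length Gs) (nth Gs)"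
proof -
  have Gs: "\<forall>G\<in>set Gs. G \<subseteq> X \<and> large \<alpha> G" "sorted_wrt set_less Gs"
    "sorted_wrt (homogeneous P) Gs" "large \<beta> (Max ` set Gs)"
    using assms(1) by (simp_all add: grouping_list_def)
  have G: "Gs ! i \<subseteq> X" "large \<alpha> (Gs ! i)" "finite (Gs ! i)" "Gs ! i \<noteq> {}"
    if "i < length Gs" for i
  proof -
    show "Gs ! i \<subseteq> X" "large \<alpha> (Gs ! i)" using Gs(1) that by simp_all
    then show "finite (Gs ! i)" "Gs ! i \<noteq> {}" using large_finite large_nonempty assms(2) by auto
  qed
  have separated: "\<forall>i j. i < j \<and> j < length Gs \<longrightarrow> Max (Gs ! i) < Min (Gs ! j)"
  proof (intro allI impI)
    fix i j assume ij: "i < j \<and> j < length Gs"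
    then have "set_less (Gs ! i) (Gs ! j)" using Gs(2) by (simp add: sorted_wrt_iff_nth_less)
    then show "Max (Gs ! i) < Min (Gs ! j)" using G[of i] G[of j] ij by (simp add: set_less_def)
  qed
  have "set Gs = (\<lambda>i. Gs ! i) ` {..<length Gs}"
    unfolding set_conv_nth by blast
  then have maxes: "large \<beta> ((\<lambda>i. Max (Gs ! i)) ` {..<length Gs})"
    using Gs(4) by (simp add: image_image)
  have "\<forall>i j. i < j \<and> j < length Gs \<longrightarrow> homogeneous P (Gs ! i) (Gs ! j)"
    using Gs(3) by (simp add: sorted_wrt_iff_nth_less)
  then have homog: "\<forall>i j. i < j \<and> j < length Gs \<longrightarrow>
      (\<forall>x\<in>Gs ! i. \<forall>x'\<in>Gs ! i. \<forall>y\<in>Gs ! j. \<forall>y'\<in>Gs ! j. P x y = P x' y')"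
    unfolding homogeneous_def by blast
  have "\<forall>i<length Gs. finite (Gs ! i) \<and> Gs ! i \<subseteq> X" "\<forall>i<length Gs. large \<alpha> (Gs ! i)"
    using G by blast+
  then show ?thesis
    unfolding grouping_def using separated maxes homog by blast
qed

theorem theorem2p4:
  fixes n k :: nat and X :: "nat set"
  assumes "finite X"
    and "large (omega_pow (n + 6 * k)) X"
    and "exp_sparse X"
  shows "\<forall>P :: nat \<Rightarrow> nat \<Rightarrow> bool. \<exists>l F. grouping (omega_pow n) (omega_pow k) X P l F"
proof
  fix P :: "nat \<Rightarrow> nat \<Rightarrow> bool"
  (* finite X is part of largeness. *)
  have "large [n + 6 * k] X" using assms(2) by (simp add: omega_pow_def)
  then obtain Gs where "grouping_list [n] [k] X P Gs"
    using grouping_list_exists[OF assms(3)] by blast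
  then have "grouping [n] [k] X P (length Gs) (nth Gs)"
    by (rule grouping_list_grouping) simp
  then show "\<exists>l F. grouping (omega_pow n) (omega_pow k) X P l F"
    unfolding omega_pow_def by blast
qed

end
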